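(* Let $T=\mathrm{diag}(t_1,t_2,t_3)$ with $t_1t_2t_3\neq 0$ be such that the T-state $\rho_T$ is a valid density operator, and suppose $2\pi N_T|\det T|=1$. Define the probability density $P(\boldsymbol n)=N_T(\boldsymbol n^\intercal T^{-2}\boldsymbol n)^{-2}$ on $S^2$ and, for each unit vector $\boldsymbol e\in S^2$, the region $\mathcal R[\boldsymbol e]=\{\boldsymbol n\in S^2:\ \boldsymbol n\cdot T^{-1}\boldsymbol e\geq 0\}$ (i.e. the deterministic response $p(1|\boldsymbol e,\boldsymbol n)=1$ if $\boldsymbol n\in\mathcal R[\boldsymbol e]$ and $0$ otherwise). Then for every unit vector $\boldsymbol e$, \[ \int_{\mathcal R[\boldsymbol e]}P(\boldsymbol n)\,\mathrm{d}^2\boldsymbol n=\tfrac12,\qquad \int_{\mathcal R[\boldsymbol e]}P(\boldsymbol n)\,\boldsymbol n\,\mathrm{d}^2\boldsymbol n=\tfrac12\,T\boldsymbol e . \] Consequently, $\rho_T$ admits a local hidden state model for Bob with respect to all projective measurements by Alice: for every projector $E=\tfrac12(\mathbb 1+\boldsymbol e\cdot\boldsymbol\sigma)$, $|\boldsymbol e|=1$, \[ \mathrm{tr}_A[\rho_T\,(E\otimes\mathbb 1)]=\int_{S^2}P(\boldsymbol n)\,p(1|\boldsymbol e,\boldsymbol n)\,\tfrac12(\mathbb 1+\boldsymbol n\cdot\boldsymbol\sigma)\,\mathrm{d}^2\boldsymbol n,\qquad \mathrm{tr}[\rho_T(E\otimes\mathbb 1)]=\int_{S^2}P(\boldsymbol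 n)\,p(1|\boldsymbol e,\boldsymbol n)\,\mathrm{d}^2\boldsymbol n, \] so $\rho_T$ is not EPR-steerable by Alice using projective measurements.
   Context: $\boldsymbol\sigma=(\sigma_1,\sigma_2,\sigma_3)$ are the Pauli matrices. A T-state is the two-qubit state $\rho_T=\frac14\big(\mathbb 1\otimes\mathbb 1+\sum_{j=1}^3 t_j\,\sigma_j\otimes\sigma_j\big)$. $S^2$ is the unit sphere with surface measure $\mathrm{d}^2\boldsymbol n$, and $N_T$ is defined by $N_T^{-1}=\int_{S^2}(\boldsymbol n^\intercal T^{-2}\boldsymbol n)^{-2}\,\mathrm{d}^2\boldsymbol n$. For a projector $E$ on Alice's qubit, $\mathrm{tr}_A$ denotes the partial trace over Alice's qubit. A state is non-EPR-steerable by Alice (for projective measurements) if there exist a probability distribution over hidden variables $\lambda$, response probabilities $p(1|E,\lambda)\in[0,1]$ for each projector $E$ of Alice, and qubit states $\rho_B(\lambda)$ such that $\mathrm{tr}_A[\rho(E\otimes\mathbb 1)]=\sum_\lambda P(\lambda)p(1|E,\lambda)\rho_B(\lambda)$ for every projector $E$ (which also implies $\mathrm{tr}[\rho(E\otimes \mathbb 1)]=\sum_\lambda P(\lambda)p(1|E,\lambda)$); here the hidden variable is the unit vector $\boldsymbol n$ and $\rho_B(\boldsymbol n)=\tfrac12(\mathbb 1+\boldsymbol n\cdot\boldsymbol\sigma)$. *)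

theory Defs
  imports "HOL-Analysis.Analysis"
begin

text \<open>The surface (area) measure on S^2 is realised through the cone construction:
  for g on S^2, the integral of g over S^2 w.r.t. surface measure equals
  3 times the Lebesgue integral over the unit ball of g(x/|x|).\<close>

definition sphere_integral :: "(real^3 \<Rightarrow> 'b::{banach,second_countable_topology}) \<Rightarrow> 'b" where
  "sphere_integral g = 3 *\<^sub>R (LINT x : ball 0 1 | lborel. g (x /\<^sub>R norm x))"

definition unit_sphere3 :: "(real^3) set" where
  "unit_sphere3 = sphere 0 1"

type_synonym cmat2 = "complex^2^2"
type_synonym cmat4 = "complex^(2\<times>2)^(2\<times>2)"

definition pauli :: "3 \<Rightarrow> cmat2" where
  "pauli k = (if k = 1 then vector [vector [0, 1], vector [1, 0]]
              else if k = 2 then vector [vector [0, -\<i>], vector [\<i>, 0]]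
              else vector [vector [1, 0], vector [0, -1]])"

definition dot_sigma :: "real^3 \<Rightarrow> cmat2" where
  "dot_sigma n = (\<Sum>k\<in>UNIV. n $ k *\<^sub>R pauli k)"

definition kron :: "complex^('a::finite)^'a \<Rightarrow> complex^('b::finite)^'b \<Rightarrow> complex^('a\<times>'b)^('a\<times>'b)" where
  "kron A B = (\<chi> p q. A $ fst p $ fst q * B $ snd p $ snd q)"

definition ptrace_A :: "complex^('a::finite\<times>'b::finite)^('a\<times>'b) \<Rightarrow> complex^'b^'b" where
  "ptrace_A M = (\<chi> j l. \<Sum>i\<in>UNIV. M $ (i, j) $ (i, l))"

definition mtrace :: "complex^'n^'n \<Rightarrow> complex" where
  "mtrace M = (\<Sum>i\<in>UNIV. M $ i $ i)"

text \<open>Density operator: positive semidefinite (which implies Hermitian over C) with unit trace.\<close>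
definition density_operator :: "complex^'n^'n \<Rightarrow> bool" where
  "density_operator M \<longleftrightarrow>
     (\<forall>v. let q = (\<Sum>i\<in>UNIV. cnj (v $ i) * (M *v v) $ i) in Im q = 0 \<and> Re q \<ge> 0)
     \<and> mtrace M = 1"

definition diag3 :: "real^3 \<Rightarrow> real^3^3" where
  "diag3 t = (\<chi> i j. if i = j then t $ i else 0)"

definition T_state :: "real^3 \<Rightarrow> cmat4" where
  "T_state t = (1/4 :: real) *\<^sub>R (kron (mat 1) (mat 1)
                 + (\<Sum>j\<in>UNIV. t $ j *\<^sub>R kron (pauli j) (pauli j)))"

definition N_T :: "real^3^3 \<Rightarrow> real" where
  "N_T T = inverse (sphere_integral
      (\<lambda>n. inverse ((n \<bullet> ((matrix_inv T ** matrix_inv T) *v n)) ^ 2)))"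

definition LHS_density :: "real^3^3 \<Rightarrow> real^3 \<Rightarrow> real" where
  "LHS_density T n = N_T T * inverse ((n \<bullet> ((matrix_inv T ** matrix_inv T) *v n)) ^ 2)"

definition region :: "real^3^3 \<Rightarrow> real^3 \<Rightarrow> (real^3) set" where
  "region T e = {n \<in> unit_sphere3. n \<bullet> (matrix_inv T *v e) \<ge> 0}"

definition response :: "real^3^3 \<Rightarrow> real^3 \<Rightarrow> real^3 \<Rightarrow> real" where
  "response T e n = (if n \<in> region T e then 1 else 0)"

definition projector :: "real^3 \<Rightarrow> cmat2" where
  "projector e = (1/2 :: real) *\<^sub>R (mat 1 + dot_sigma e)"

end

theory Submission
  imports Defs
begin

text \<open>Write \<open>P(n) = N |T\<^sup>-\<^sup>1 n|\<^sup>-\<^sup>4\<close> and \<open>a = T\<^sup>-\<^sup>1 e\<close>. The density is even and the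
  antipodal map swaps the regions \<open>n \<bullet> a \<ge> 0\<close> and \<open>n \<bullet> a \<le> 0\<close>, which cover the sphere and
  meet in a great circle; so each carries half of the total mass \<open>1\<close>. For the first moment
  substitute \<open>n = T m / |T m|\<close>: its area factor is \<open>|det T| / |T m|\<^sup>3\<close>, the condition
  \<open>n \<bullet> a \<ge> 0\<close> becomes \<open>m \<bullet> e \<ge> 0\<close>, and \<open>P(n) n dn = N |det T| T m dm\<close>. The hemisphere
  centred at \<open>e\<close> has first moment \<open>\<pi> e\<close>, hence the moment is \<open>\<pi> N |det T| T e = T e / 2\<close>.
  The two quantum identities then only use the Bloch decomposition
  \<open>tr\<^sub>A[\<rho>\<^sub>T (E \<otimes> 1)] = (1 + T e \<cdot> \<sigma>) / 4\<close>.

  Surface integrals are integrals over the unit ball of the radial extension, so both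
  substitutions are carried out as changes of variables in the ball.\<close>

lemma diag3_mult: "diag3 a ** diag3 b = diag3 (\<chi> i. a$i * b$i)"
  by (simp add: diag3_def matrix_matrix_mult_def vec_eq_iff forall_3 sum_3)

lemma diag3_mulv: "diag3 a *v x = (\<chi> i. a$i * x$i)"
  by (simp add: diag3_def matrix_vector_mult_def vec_eq_iff forall_3 sum_3)

lemma matrix_inv_diag3:
  assumes "\<And>i. t$i \<noteq> 0"
  shows "matrix_inv (diag3 t) = diag3 (\<chi> i. inverse (t$i))"
proof -
  let ?B = "diag3 (\<chi> i. inverse (t$i))"
  have inv: "diag3 t ** ?B = mat 1" "?B ** diag3 t = mat 1"
    using assms by (simp_all add: diag3_mult, auto simp: mat_def diag3_def vec_eq_iff forall_3)
  have "diag3 t ** matrix_inv (diag3 t) = mat 1 \<and> matrix_inv (diag3 t) ** diag3 t = mat 1"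
    unfolding matrix_inv_def by (rule someI[of _ ?B]) (use inv in auto)
  then have "matrix_inv (diag3 t) = matrix_inv (diag3 t) ** (diag3 t ** ?B)"
    using inv by simp
  also have "\<dots> = ?B"
    using \<open>_ \<and> _\<close> by (simp add: matrix_mul_assoc)
  finally show ?thesis .
qed

lemma matrix_inv_diag3_mulv:
  assumes "\<And>i. t$i \<noteq> 0"
  shows "matrix_inv (diag3 t) *v (diag3 t *v z) = z" "diag3 t *v (matrix_inv (diag3 t) *v z) = z"
  using assms by (simp_all add: matrix_inv_diag3 diag3_mulv vec_eq_iff)

lemma matrix_rank1_update:
  fixes a b :: "real^3"
  shows "matrix (\<lambda>h. c *\<^sub>R h + (b \<bullet> h) *\<^sub>R a) = c *\<^sub>R mat 1 + (\<chi> i j. a$i * b$j)"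
  by (simp add: matrix_def vec_eq_iff mat_def inner_axis mult.commute) (simp add: axis_def)

lemma matrix_rank2_update:
  fixes a b p q :: "real^3"
  shows "matrix (\<lambda>h. c *\<^sub>R h + (b \<bullet> h) *\<^sub>R a + (q \<bullet> h) *\<^sub>R p) =
     c *\<^sub>R mat 1 + (\<chi> i j. a$i * b$j) + (\<chi> i j. p$i * q$j)"
  by (simp add: matrix_def vec_eq_iff mat_def inner_axis mult.commute) (simp add: axis_def)

lemma det3_rank1_update:
  fixes a b :: "real^3"
  shows "det (c *\<^sub>R mat 1 + (\<chi> i j. a$i * b$j)) = c^3 + c^2 * (a \<bullet> b)"
  by (simp add: det_3 inner_vec_def sum_3 mat_def) algebra

lemma det3_rank2_update:
  fixes a b p q :: "real^3"
  shows "det (c *\<^sub>R mat 1 + (\<chi> i j. a$i * b$j) + (\<chi> i j. p$i * q$j)) =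
     c^3 + c^2 * (a \<bullet> b + p \<bullet> q) + c * ((a \<bullet> b) * (p \<bullet> q) - (a \<bullet> q) * (p \<bullet> b))"
  by (simp add: det_3 inner_vec_def sum_3 mat_def) algebra

lemma matrix_compose_matrix_vector:
  fixes A :: "real^'n^'m"
  shows "matrix (\<lambda>h. A *v g h) = A ** matrix g"
  by (simp add: matrix_def matrix_matrix_mult_def matrix_vector_mult_def vec_eq_iff)

lemma has_derivative_norm_nonzero:
  "x \<noteq> 0 \<Longrightarrow> (norm has_derivative (\<lambda>h. (x \<bullet> h) / norm x)) (at x)"
  using has_derivative_norm[of x] by (simp add: sgn_div_norm inner_commute divide_inverse_commute)

section \<open>The first moment of a hemisphere\<close>

definition angle_doubling :: "real^3 \<Rightarrow> real^3 \<Rightarrow> real^3" where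
  "angle_doubling e y = (2 * (y \<bullet> e) / norm y) *\<^sub>R y - norm y *\<^sub>R e"

lemma norm_angle_doubling:
  assumes "norm e = 1"
  shows "norm (angle_doubling e x) = norm x"
proof (cases "x = 0")
  case False
  have ee: "e \<bullet> e = 1" and xx: "x \<bullet> x = norm x ^ 2"
    using assms by (simp_all add: dot_square_norm)
  have "norm (angle_doubling e x) ^ 2 = norm x ^ 2"
    unfolding power2_norm_eq_inner angle_doubling_def using False
    by (simp add: inner_diff_left inner_diff_right inner_commute ee xx field_simps power2_eq_square)
  then show ?thesis by (simp add: power2_eq_iff_nonneg)
qed (simp add: angle_doubling_def)

lemma angle_doubling_jacobian:
  assumes "norm e = 1" "x \<noteq> 0"
  obtains D where "(angle_doubling e has_derivative D) (at x)"
    "det (matrix D) = 4 * (x \<bullet> e) / norm x"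
proof
  let ?u = "x /\<^sub>R norm x" and ?b = "(2 / norm x) *\<^sub>R e - (2 * (x \<bullet> e) / norm x ^ 3) *\<^sub>R x"
  let ?D = "\<lambda>h. (2 * (x \<bullet> e) / norm x) *\<^sub>R h + (?b \<bullet> h) *\<^sub>R x + (?u \<bullet> h) *\<^sub>R (- e)"
  show "(angle_doubling e has_derivative ?D) (at x)"
    unfolding angle_doubling_def
    apply (rule has_derivative_eq_rhs)
     apply (rule derivative_eq_intros has_derivative_norm_nonzero assms | simp add: assms)+
    using assms by (auto simp: inner_diff_left inner_diff_right inner_commute field_simps power3_eq_cube)
  have ee: "e \<bullet> e = 1" and xx: "x \<bullet> x = norm x ^ 2"
    using assms by (simp_all add: dot_square_norm)
  have n0: "norm x \<noteq> 0" using assms by simp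
  have products: "x \<bullet> ?b = 0" "- e \<bullet> ?u = - (x \<bullet> e) / norm x" "x \<bullet> ?u = norm x"
    "- e \<bullet> ?b = 2 * (x \<bullet> e) ^ 2 / norm x ^ 3 - 2 / norm x"
    using n0 by (simp_all add: inner_diff_right inner_commute ee xx field_simps power2_eq_square power3_eq_cube)
  show "det (matrix ?D) = 4 * (x \<bullet> e) / norm x"
    unfolding matrix_rank2_update det3_rank2_update products using n0
    by (simp add: field_simps power2_eq_square power3_eq_cube)
qed

lemma inj_on_angle_doubling:
  assumes "norm e = 1"
  shows "inj_on (angle_doubling e) {x. 0 < x \<bullet> e}"
proof (rule inj_onI)
  fix x y assume "x \<in> {x. 0 < x \<bullet> e}" "y \<in> {x. 0 < x \<bullet> e}" and eq: "angle_doubling e x = angle_doubling e y"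
  then have pos: "0 < x \<bullet> e" "0 < y \<bullet> e" by auto
  have r: "norm x = norm y"
    using arg_cong[OF eq, of norm] unfolding norm_angle_doubling[OF assms] .
  have x0: "norm x > 0" using pos by auto
  have scaled: "(2 * (x \<bullet> e) / norm x) *\<^sub>R x = (2 * (y \<bullet> e) / norm x) *\<^sub>R y"
    using eq r unfolding angle_doubling_def by (simp add: algebra_simps)
  then have "(2 * (x \<bullet> e) / norm x) * (x \<bullet> e) = (2 * (y \<bullet> e) / norm x) * (y \<bullet> e)"
    by (metis inner_scaleR_left)
  then have "(x \<bullet> e)^2 = (y \<bullet> e)^2" using x0 by (simp add: field_simps power2_eq_square)
  then have "x \<bullet> e = y \<bullet> e" using pos by (simp add: power2_eq_iff_nonneg)
  then show "x = y" using scaled pos x0 by simp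
qed

text \<open>The preimage of \<open>y\<close> is the vector of length \<open>norm y\<close> bisecting the angle between
  \<open>y\<close> and \<open>e\<close>; it fails to exist only on the axis of \<open>e\<close>.\<close>
lemma angle_doubling_surj:
  assumes e: "norm e = 1" and y: "y \<notin> span {e}"
  obtains x where "0 < x \<bullet> e" "norm x = norm y" "angle_doubling e x = y"
proof -
  define m where "m = y /\<^sub>R norm y + e"
  have y0: "y \<noteq> 0" using y span_zero by auto
  then have ry: "norm y > 0" by simp
  have ee: "e \<bullet> e = 1" and yy: "y \<bullet> y = norm y ^ 2" using e by (simp_all add: dot_square_norm)
  have "y + norm y *\<^sub>R e \<noteq> 0"
  proof
    assume "y + norm y *\<^sub>R e = 0"
    then have "y = (- norm y) *\<^sub>R e" by (simp add: algebra_simps eq_neg_iff_add_eq_0)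
    then show False using y by (metis span_base span_mul singletonI)
  qed
  moreover have "norm (y + norm y *\<^sub>R e) ^ 2 = 2 * norm y * (norm y + y \<bullet> e)"
    unfolding power2_norm_eq_inner
    by (simp add: inner_add_left inner_add_right inner_commute ee yy power2_eq_square algebra_simps)
  ultimately have "0 < 2 * norm y * (norm y + y \<bullet> e)"
    by (metis zero_less_norm_iff zero_less_power)
  then have "0 < norm y + y \<bullet> e"
    using ry by (simp add: zero_less_mult_iff)
  then have me: "m \<bullet> e > 0"
    unfolding m_def using ry ee by (simp add: inner_add_left field_simps)
  have mm: "norm m ^ 2 = 2 * (m \<bullet> e)"
    unfolding m_def power2_norm_eq_inner using ry
    by (simp add: inner_add_left inner_add_right inner_commute ee yy field_simps power2_eq_square)
  have m0: "norm m > 0" using me by (metis inner_zero_left zero_less_norm_iff order_less_irrefl)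
  define x where "x = (norm y / norm m) *\<^sub>R m"
  have nx: "norm x = norm y" unfolding x_def using m0 by simp
  have xe: "0 < x \<bullet> e" unfolding x_def using m0 ry me by simp
  have "angle_doubling e x = (2 * (x \<bullet> e) / norm x) *\<^sub>R x - norm y *\<^sub>R e"
    unfolding angle_doubling_def nx ..
  also have "(2 * (x \<bullet> e) / norm x) *\<^sub>R x = (norm y * (2 * (m \<bullet> e) / norm m ^ 2)) *\<^sub>R m"
    unfolding nx x_def using ry m0 by (simp add: field_simps power2_eq_square)
  also have "\<dots> = norm y *\<^sub>R m" using mm me by simp
  finally have "angle_doubling e x = y"
    unfolding m_def using ry by (simp add: algebra_simps)
  with xe nx show thesis by (rule that)
qed

lemma angle_doubling_half_ball_image:
  fixes e :: "real^3"
  assumes e: "norm e = 1"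
  defines "S \<equiv> ball 0 1 \<inter> {x. 0 < x \<bullet> e}"
  shows "angle_doubling e ` S \<subseteq> ball 0 1" "negligible (ball 0 1 - angle_doubling e ` S)"
proof -
  show "angle_doubling e ` S \<subseteq> ball 0 1"
    using norm_angle_doubling[OF e] by (auto simp: S_def)
  have "ball 0 1 - angle_doubling e ` S \<subseteq> span {e}"
  proof
    fix y assume y: "y \<in> ball 0 1 - angle_doubling e ` S"
    show "y \<in> span {e}"
    proof (rule ccontr)
      assume "y \<notin> span {e}"
      then obtain x where "0 < x \<bullet> e" "norm x = norm y" "angle_doubling e x = y"
        using angle_doubling_surj[OF e] by blast
      then show False using y by (auto simp: S_def)
    qed
  qed
  moreover have "dim (span {e}) < DIM(real^3)"
    using dim_le_card[of "{e}" "span {e}"] by simp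
  ultimately show "negligible (ball 0 1 - angle_doubling e ` S)"
    using negligible_subset[OF negligible_lowdim] by blast
qed

text \<open>On directions, \<open>angle_doubling e\<close> reflects \<open>e\<close> in the line through \<open>u = x/|x|\<close>:
  it doubles the angle to \<open>e\<close> and maps the open half ball onto the ball up to the axis of
  \<open>e\<close>, with Jacobian \<open>4 (u \<bullet> e)\<close>. Comparing volumes gives the integral.\<close>
lemma integral_half_ball_cos:
  fixes e :: "real^3"
  assumes e: "norm e = 1"
  shows "integral (ball 0 1 \<inter> {x. 0 < x \<bullet> e}) (\<lambda>x. (x \<bullet> e) / norm x) = pi / 3"
proof -
  define S where "S = ball (0::real^3) 1 \<inter> {x. 0 < x \<bullet> e}"
  have "\<exists>D. (angle_doubling e has_derivative D) (at x) \<and> det (matrix D) = 4 * (x \<bullet> e) / norm x"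
    if "x \<in> S" for x
  proof -
    have "x \<noteq> 0" using that by (auto simp: S_def)
    then show ?thesis using angle_doubling_jacobian[OF e] by blast
  qed
  then have "\<forall>x\<in>S. \<exists>D. (angle_doubling e has_derivative D) (at x) \<and> det (matrix D) = 4 * (x \<bullet> e) / norm x"
    by blast
  then obtain D where D: "\<forall>x\<in>S. (angle_doubling e has_derivative D x) (at x) \<and>
      det (matrix (D x)) = 4 * (x \<bullet> e) / norm x"
    by (rule bchoice[THEN exE])
  have Sleb: "S \<in> sets lebesgue"
    unfolding S_def by (intro fmeasurableD lmeasurable_open)
      (auto intro!: open_Int open_Collect_less continuous_intros bounded_Int)
  have der: "\<And>x. x \<in> S \<Longrightarrow> (angle_doubling e has_derivative D x) (at x within S)"
    using D has_derivative_at_withinI by blast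
  have inj: "inj_on (angle_doubling e) S"
    by (rule inj_on_subset[OF inj_on_angle_doubling[OF e]]) (auto simp: S_def)
  note sub = angle_doubling_half_ball_image(1)[OF e, folded S_def]
  note negl = angle_doubling_half_ball_image(2)[OF e, folded S_def]
  have "angle_doubling e ` S = ball 0 1 - (ball 0 1 - angle_doubling e ` S)"
    using sub by blast
  then have image: "angle_doubling e ` S \<in> lmeasurable"
    using negl by (metis fmeasurable.Diff lmeasurable_ball negligible_imp_measurable)
  have "integral S (\<lambda>x. 4 * ((x \<bullet> e) / norm x)) = integral S (\<lambda>x. \<bar>det (matrix (D x))\<bar>)"
    by (rule integral_cong) (use D in \<open>simp add: S_def\<close>)
  also have "\<dots> = measure lebesgue (angle_doubling e ` S)"
    using measure_differentiable_image_eq[OF Sleb der inj] measurable_differentiable_image_eq[OF Sleb der inj]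
      image by simp
  also have "\<dots> = measure lebesgue (ball (0::real^3) 1)"
  proof (rule sym, rule measure_negligible_symdiff[OF image])
    show "negligible (angle_doubling e ` S - ball 0 1 \<union> (ball 0 1 - angle_doubling e ` S))"
      using negl sub by (simp add: Diff_eq_empty_iff[THEN iffD2])
  qed
  also have "\<dots> = 4 / 3 * pi"
    using sphere_volume[of 1 0] by simp
  finally have "integral S (\<lambda>x. 4 * ((x \<bullet> e) / norm x)) = 4 / 3 * pi" .
  then show ?thesis
    unfolding S_def integral_mult_right by simp
qed

lemma set_integrable_lborel_bounded:
  fixes h :: "'a::euclidean_space \<Rightarrow> 'b::{banach, second_countable_topology}"
  assumes "h \<in> borel_measurable borel" "S \<in> sets borel" "bounded S" "\<And>x. x \<in> S \<Longrightarrow> norm (h x) \<le> C"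
  shows "set_integrable lborel S h"
  unfolding set_integrable_def
  by (rule integrableI_bounded_set_indicator) (use assms emeasure_bounded_finite in auto)

lemma absolutely_integrable_on_of_lborel:
  fixes f :: "'a::euclidean_space \<Rightarrow> 'b::euclidean_space"
  assumes "set_integrable lborel S f"
  shows "f absolutely_integrable_on S"
  using assms unfolding set_integrable_def
  by (subst integrable_completion) (auto dest: borel_measurable_integrable)

lemma integral_ball_orthogonal_transformation:
  fixes f :: "real^'m::{finite,wellorder} \<Rightarrow> real^'n" and H :: "real^'m::_ \<Rightarrow> real^'m::_"
  assumes H: "orthogonal_transformation H" and f: "f absolutely_integrable_on ball 0 r"
  shows "integral (ball 0 r) (\<lambda>x. f (H x)) = integral (ball 0 r) f"
proof -
  have lin: "linear H" and ball: "H ` ball 0 r = ball 0 r"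
    using H image_orthogonal_transformation_ball[OF H, of 0 r]
    by (auto simp: orthogonal_transformation_def linear_0)
  have "integral (H ` ball 0 r) f = \<bar>det (matrix H)\<bar> *\<^sub>R integral (ball 0 r) (f \<circ> H)"
    by (rule integral_change_of_variables_linear[OF lin]) (simp add: ball f)
  then show ?thesis
    by (simp add: ball orthogonal_transformation_det[OF H] o_def)
qed

definition halfspace_direction :: "real^3 \<Rightarrow> real^3 \<Rightarrow> real^3" where
  "halfspace_direction e z = indicator {z. 0 \<le> z \<bullet> e} z *\<^sub>R (z /\<^sub>R norm z)"

lemma halfspace_direction_measurable [measurable]:
  "halfspace_direction e \<in> borel_measurable borel"
  unfolding halfspace_direction_def by measurable

lemma norm_halfspace_direction_le: "norm (halfspace_direction e z) \<le> 1"
  by (cases "z = 0") (auto simp: halfspace_direction_def indicator_def)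

lemma halfspace_direction_absolutely_integrable:
  "halfspace_direction e absolutely_integrable_on ball 0 1"
  by (intro absolutely_integrable_on_of_lborel set_integrable_lborel_bounded[where C=1])
    (auto simp: norm_halfspace_direction_le)

text \<open>The reflection in the plane orthogonal to \<open>v\<close> fixes \<open>e\<close> and commutes with
  \<open>halfspace_direction e\<close>, so it fixes the integral.\<close>
lemma integral_halfspace_direction_orthogonal:
  fixes e v :: "real^3"
  assumes ve: "v \<bullet> e = 0"
  shows "integral (ball 0 1) (halfspace_direction e) \<bullet> v = 0"
proof (cases "v = 0")
  case False
  define H where "H = (\<lambda>z::real^3. z - (2 * (z \<bullet> v) / (v \<bullet> v)) *\<^sub>R v)"
  define V where "V = integral (ball 0 1) (halfspace_direction e)"
  have vv: "v \<bullet> v \<noteq> 0" using False by simp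
  have lin: "linear H" unfolding H_def
    by (rule linearI) (auto simp: inner_add_left algebra_simps add_divide_distrib)
  have H: "orthogonal_transformation H"
    unfolding orthogonal_transformation_def using lin vv
    by (auto simp: H_def inner_diff_left inner_diff_right inner_commute field_simps)
  have "halfspace_direction e (H z) = H (halfspace_direction e z)" for z
    using orthogonal_transformation_norm[OF H, of z] linear_cmul[OF lin] ve
    by (simp add: halfspace_direction_def H_def inner_diff_left divide_inverse_commute indicator_def)
  then have "V = integral (ball 0 1) (\<lambda>z. H (halfspace_direction e z))"
    unfolding V_def using integral_ball_orthogonal_transformation[OF H halfspace_direction_absolutely_integrable[of e]]
    by simp
  also have "\<dots> = H V"
    unfolding V_def using lin halfspace_direction_absolutely_integrable
    by (intro integral_linear[unfolded o_def]) (auto simp: linear_conv_bounded_linear set_lebesgue_integral_eq_integral)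
  finally have "(2 * (V \<bullet> v) / (v \<bullet> v)) *\<^sub>R v = 0"
    unfolding H_def by (metis add_diff_cancel_left' diff_add_cancel diff_self)
  then show ?thesis using False vv unfolding V_def by simp
qed simp

lemma integral_halfspace_direction:
  fixes e :: "real^3"
  assumes e: "norm e = 1"
  shows "integral (ball 0 1) (halfspace_direction e) = (pi / 3) *\<^sub>R e"
proof -
  define V where "V = integral (ball 0 1) (halfspace_direction e)"
  have ee: "e \<bullet> e = 1" using e by (simp add: dot_square_norm)
  have "V \<bullet> e = integral (ball 0 1) (\<lambda>z. halfspace_direction e z \<bullet> e)"
    unfolding V_def using halfspace_direction_absolutely_integrable
    by (intro integral_component_eq[symmetric]) (simp add: set_lebesgue_integral_eq_integral)
  also have "(\<lambda>z. halfspace_direction e z \<bullet> e) = (\<lambda>z. if z \<in> {x. 0 < x \<bullet> e} then (z \<bullet> e) / norm z else 0)"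
    by (auto simp: halfspace_direction_def indicator_def divide_inverse_commute)
  also have "integral (ball 0 1) \<dots> = integral (ball 0 1 \<inter> {x. 0 < x \<bullet> e}) (\<lambda>z. (z \<bullet> e) / norm z)"
    using integral_restrict_Int[of "ball 0 1" "{x. 0 < x \<bullet> e}" "\<lambda>z. (z \<bullet> e) / norm z"]
    by (simp add: Int_commute)
  also have "\<dots> = pi / 3"
    by (rule integral_half_ball_cos[OF e])
  finally have Ve: "V \<bullet> e = pi / 3" .
  have "V - (V \<bullet> e) *\<^sub>R e = 0"
  proof -
    let ?w = "V - (V \<bullet> e) *\<^sub>R e"
    have "?w \<bullet> e = 0" by (simp add: inner_diff_left ee)
    then have "V \<bullet> ?w = 0"
      unfolding V_def by (rule integral_halfspace_direction_orthogonal)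
    then have "?w \<bullet> ?w = 0"
      by (simp add: inner_diff_left inner_diff_right inner_commute ee)
    then show ?thesis by simp
  qed
  then show ?thesis using Ve unfolding V_def by simp
qed

section \<open>The radial extension of a diagonal map\<close>

lemma diag3_mulv_eq_0_iff: "(\<And>i. t$i \<noteq> 0) \<Longrightarrow> diag3 t *v z = 0 \<longleftrightarrow> z = 0"
  by (simp add: diag3_mulv vec_eq_iff)

lemma diag3_mulv_inner: "(diag3 t *v z) \<bullet> h = z \<bullet> (diag3 t *v h)"
  by (simp add: diag3_mulv inner_vec_def sum_3 algebra_simps)

lemma diag3_mulv_inner_matrix_inv:
  assumes "\<And>i. t$i \<noteq> 0"
  shows "(diag3 t *v z) \<bullet> (matrix_inv (diag3 t) *v e) = z \<bullet> e"
  using matrix_inv_diag3_mulv[OF assms] by (metis diag3_mulv_inner)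

lemma has_derivative_norm_matrix_vector:
  fixes A :: "real^'n^'m"
  assumes "A *v z \<noteq> 0"
  shows "((\<lambda>z. norm (A *v z)) has_derivative (\<lambda>h. ((A *v z) \<bullet> (A *v h)) / norm (A *v z))) (at z)"
  using has_derivative_compose[OF linear_imp_has_derivative[OF matrix_vector_mul_linear[of A]]
      has_derivative_norm_nonzero[OF assms]]
  by (simp add: o_def)

definition radial_diag3 :: "real^3 \<Rightarrow> real^3 \<Rightarrow> real^3" where
  "radial_diag3 t z = (norm z / norm (diag3 t *v z)) *\<^sub>R (diag3 t *v z)"

lemma norm_radial_diag3:
  assumes "\<And>i. t$i \<noteq> 0"
  shows "norm (radial_diag3 t z) = norm z"
  by (cases "z = 0") (simp_all add: radial_diag3_def diag3_mulv_eq_0_iff[OF assms])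

lemma inj_radial_diag3:
  assumes t: "\<And>i. t$i \<noteq> 0"
  shows "inj (radial_diag3 t)"
proof (rule injI)
  fix x y assume eq: "radial_diag3 t x = radial_diag3 t y"
  have r: "norm x = norm y"
    using arg_cong[OF eq, of norm] unfolding norm_radial_diag3[OF t] .
  show "x = y"
  proof (cases "y = 0")
    case False
    with r have "x \<noteq> 0" by auto
    then have q: "norm (diag3 t *v x) > 0" "norm (diag3 t *v y) > 0"
      using False diag3_mulv_eq_0_iff[OF t] by auto
    define c where "c = norm (diag3 t *v x) / norm (diag3 t *v y)"
    have "(norm (diag3 t *v x) / norm y) *\<^sub>R radial_diag3 t x =
        (norm (diag3 t *v x) / norm y) *\<^sub>R radial_diag3 t y"
      using eq by simp
    then have "diag3 t *v x = c *\<^sub>R (diag3 t *v y)"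
      using r q False unfolding radial_diag3_def c_def by simp
    then have "diag3 t *v (x - c *\<^sub>R y) = 0"
      by (simp add: matrix_vector_mult_diff_distrib matrix_vector_mult_scaleR)
    then have x: "x = c *\<^sub>R y"
      using diag3_mulv_eq_0_iff[OF t] by simp
    have "c > 0" using q by (simp add: c_def)
    then have "norm x = c * norm y" using x by simp
    then have "c = 1" using r False by simp
    then show ?thesis using x by simp
  qed (use r in simp)
qed

lemma radial_diag3_surj:
  assumes t: "\<And>i. t$i \<noteq> 0"
  obtains z where "radial_diag3 t z = y"
proof (cases "y = 0")
  case True
  then show ?thesis using that[of 0] by (simp add: radial_diag3_def)
next
  case False
  define u where "u = matrix_inv (diag3 t) *v y"
  have Tu: "diag3 t *v u = y" unfolding u_def by (rule matrix_inv_diag3_mulv(2)[OF t])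
  then have "u \<noteq> 0" using False by auto
  then have "radial_diag3 t ((norm y / norm u) *\<^sub>R u) = y"
    using False by (simp add: radial_diag3_def matrix_vector_mult_scaleR Tu)
  then show ?thesis by (rule that)
qed

lemma radial_diag3_image:
  assumes t: "\<And>i. t$i \<noteq> 0"
  shows "radial_diag3 t ` (ball 0 1 - {0}) = ball 0 1 - {0}"
proof -
  have "radial_diag3 t z = 0 \<longleftrightarrow> z = 0" for z
    using norm_radial_diag3[OF t, of z] by (metis norm_eq_zero)
  moreover have "y \<in> range (radial_diag3 t)" for y
    using radial_diag3_surj[OF t] by (metis rangeI)
  ultimately show ?thesis
    using norm_radial_diag3[OF t] by (force simp: image_iff)
qed

lemma radial_diag3_jacobian:
  assumes t: "\<And>i. t$i \<noteq> 0" and z: "z \<noteq> 0"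
  obtains D where "(radial_diag3 t has_derivative D) (at z)"
    "det (matrix D) = det (diag3 t) * (norm z / norm (diag3 t *v z)) ^ 3"
proof
  let ?L = "diag3 t"
  let ?s = "norm z / norm (?L *v z)"
  let ?w = "z /\<^sub>R (norm z * norm (?L *v z)) - (norm z / norm (?L *v z) ^ 3) *\<^sub>R (?L *v (?L *v z))"
  let ?D = "\<lambda>h. ?L *v (?s *\<^sub>R h + (?w \<bullet> h) *\<^sub>R z)"
  have Lz: "?L *v z \<noteq> 0" using diag3_mulv_eq_0_iff[OF t] z by simp
  then have nLz: "norm (?L *v z) \<noteq> 0" by simp
  show "(radial_diag3 t has_derivative ?D) (at z)"
    unfolding radial_diag3_def
    apply (rule has_derivative_eq_rhs)
     apply (rule derivative_eq_intros has_derivative_norm_nonzero has_derivative_norm_matrix_vector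
        linear_imp_has_derivative[OF matrix_vector_mul_linear[of ?L]] z Lz | simp add: nLz)+
    using z nLz
    by (auto simp: algebra_simps inner_diff_left diag3_mulv_inner field_simps power3_eq_cube)
  have "z \<bullet> (?L *v (?L *v z)) = norm (?L *v z) ^ 2"
    by (simp add: diag3_mulv_inner[symmetric] dot_square_norm)
  then have zw: "z \<bullet> ?w = 0"
    using z nLz by (simp add: inner_diff_right dot_square_norm field_simps power2_eq_square power3_eq_cube)
  show "det (matrix ?D) = det ?L * ?s ^ 3"
    unfolding matrix_compose_matrix_vector matrix_rank1_update
    by (simp only: det_mul det3_rank1_update zw) simp
qed

lemma radial_diag3_weighted_direction:
  assumes t: "\<And>i. t$i \<noteq> 0" and z: "z \<noteq> 0"
  defines "n \<equiv> radial_diag3 t z /\<^sub>R norm (radial_diag3 t z)"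
  shows "(norm z / norm (diag3 t *v z)) ^ 3 *\<^sub>R
      ((indicator {n. 0 \<le> n \<bullet> (matrix_inv (diag3 t) *v e)} n
        * inverse (norm (matrix_inv (diag3 t) *v n) ^ 4)) *\<^sub>R n)
    = diag3 t *v halfspace_direction e z"
proof -
  define r q where "r = norm z" and "q = norm (diag3 t *v z)"
  have r: "r > 0" and q: "q > 0"
    using z diag3_mulv_eq_0_iff[OF t] by (auto simp: r_def q_def)
  have n: "n = (1 / q) *\<^sub>R (diag3 t *v z)"
    using r q by (simp add: n_def norm_radial_diag3[OF t] radial_diag3_def r_def[symmetric] q_def[symmetric])
  have "norm (matrix_inv (diag3 t) *v n) = r / q"
    using q by (simp add: n matrix_vector_mult_scaleR matrix_inv_diag3_mulv(1)[OF t] r_def)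
  moreover have "0 \<le> n \<bullet> (matrix_inv (diag3 t) *v e) \<longleftrightarrow> 0 \<le> z \<bullet> e"
    using q by (simp add: n diag3_mulv_inner_matrix_inv[OF t] zero_le_divide_iff)
  ultimately show ?thesis
    using r q unfolding halfspace_direction_def
    by (simp add: n indicator_def matrix_vector_mult_scaleR r_def[symmetric] q_def[symmetric]
        field_simps power3_eq_cube power4_eq_xxxx)
qed

lemma integral_ball_radial_diag3_substitution:
  fixes f :: "real^3 \<Rightarrow> real^3"
  assumes t: "\<And>i. t$i \<noteq> 0"
    and f: "(\<lambda>z. (\<bar>det (diag3 t)\<bar> * (norm z / norm (diag3 t *v z)) ^ 3) *\<^sub>R f (radial_diag3 t z))
      absolutely_integrable_on (ball 0 1 - {0})"
  shows "integral (ball 0 1) f = integral (ball 0 1 - {0})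
      (\<lambda>z. (\<bar>det (diag3 t)\<bar> * (norm z / norm (diag3 t *v z)) ^ 3) *\<^sub>R f (radial_diag3 t z))"
proof -
  define S where "S = ball (0::real^3) 1 - {0}"
  have "\<exists>D. (radial_diag3 t has_derivative D) (at z) \<and>
      det (matrix D) = det (diag3 t) * (norm z / norm (diag3 t *v z)) ^ 3" if "z \<in> S" for z
  proof -
    have "z \<noteq> 0" using that by (simp add: S_def)
    then show ?thesis using radial_diag3_jacobian[OF t] by blast
  qed
  then have "\<forall>z\<in>S. \<exists>D. (radial_diag3 t has_derivative D) (at z) \<and>
      det (matrix D) = det (diag3 t) * (norm z / norm (diag3 t *v z)) ^ 3"
    by blast
  then obtain D where D: "\<forall>z\<in>S. (radial_diag3 t has_derivative D z) (at z) \<and>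
      det (matrix (D z)) = det (diag3 t) * (norm z / norm (diag3 t *v z)) ^ 3"
    by (rule bchoice[THEN exE])
  have Sleb: "S \<in> sets lebesgue"
    unfolding S_def by (intro fmeasurableD lmeasurable_open bounded_subset[OF bounded_ball]) auto
  have der: "\<And>z. z \<in> S \<Longrightarrow> (radial_diag3 t has_derivative D z) (at z within S)"
    using D has_derivative_at_withinI by blast
  have inj: "inj_on (radial_diag3 t) S"
    using inj_radial_diag3[OF t] by (simp add: inj_on_def)
  have jacobian: "\<bar>det (matrix (D z))\<bar> = \<bar>det (diag3 t)\<bar> * (norm z / norm (diag3 t *v z)) ^ 3"
    if "z \<in> S" for z
    using D that by (simp add: abs_mult)
  have "set_integrable lebesgue S (\<lambda>z. \<bar>det (matrix (D z))\<bar> *\<^sub>R f (radial_diag3 t z)) =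
      set_integrable lebesgue S (\<lambda>z. (\<bar>det (diag3 t)\<bar> * (norm z / norm (diag3 t *v z)) ^ 3) *\<^sub>R f (radial_diag3 t z))"
    by (rule set_integrable_cong) (simp_all add: jacobian)
  then have "(\<lambda>z. \<bar>det (matrix (D z))\<bar> *\<^sub>R f (radial_diag3 t z)) absolutely_integrable_on S"
    using f by (simp add: S_def)
  then have "integral (radial_diag3 t ` S) f = integral S (\<lambda>z. \<bar>det (matrix (D z))\<bar> *\<^sub>R f (radial_diag3 t z))"
    using has_absolute_integral_change_of_variables[OF Sleb der inj, of f] by blast
  also have "\<dots> = integral S (\<lambda>z. (\<bar>det (diag3 t)\<bar> * (norm z / norm (diag3 t *v z)) ^ 3) *\<^sub>R f (radial_diag3 t z))"
    by (rule Henstock_Kurzweil_Integration.integral_cong) (simp add: jacobian)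
  moreover have "integral (ball 0 1) f = integral S f"
    by (rule integral_subset_negligible[symmetric]) (auto simp: S_def intro: negligible_subset[of "{0}"])
  ultimately show ?thesis
    using radial_diag3_image[OF t] by (simp add: S_def)
qed

text \<open>The substitution \<open>x = radial_diag3 t z\<close> is the cone over the map \<open>u \<mapsto> T u / |T u|\<close>
  of the sphere; it turns the weighted direction field into \<open>T\<close> applied to the plain one.\<close>
lemma integral_ball_weighted_direction:
  assumes t: "\<And>i. t$i \<noteq> 0" and e: "norm e = 1"
  shows "integral (ball 0 1) (\<lambda>x. (indicator {n. 0 \<le> n \<bullet> (matrix_inv (diag3 t) *v e)} (x /\<^sub>R norm x)
        * inverse (norm (matrix_inv (diag3 t) *v (x /\<^sub>R norm x)) ^ 4)) *\<^sub>R (x /\<^sub>R norm x))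
    = (\<bar>det (diag3 t)\<bar> * pi / 3) *\<^sub>R (diag3 t *v e)"
    (is "integral _ ?f = _")
proof -
  define S where "S = ball (0::real^3) 1 - {0}"
  define c where "c = \<bar>det (diag3 t)\<bar>"
  have pointwise: "(c * (norm z / norm (diag3 t *v z)) ^ 3) *\<^sub>R ?f (radial_diag3 t z)
      = c *\<^sub>R (diag3 t *v halfspace_direction e z)" if "z \<in> S" for z
  proof -
    have "z \<noteq> 0" using that by (simp add: S_def)
    have "(c * (norm z / norm (diag3 t *v z)) ^ 3) *\<^sub>R ?f (radial_diag3 t z)
        = c *\<^sub>R ((norm z / norm (diag3 t *v z)) ^ 3 *\<^sub>R ?f (radial_diag3 t z))"
      by (simp only: scaleR_scaleR mult.assoc)
    also have "\<dots> = c *\<^sub>R (diag3 t *v halfspace_direction e z)"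
      by (simp only: radial_diag3_weighted_direction[OF t \<open>z \<noteq> 0\<close>])
    finally show ?thesis .
  qed
  have lin: "bounded_linear (\<lambda>v. c *\<^sub>R (diag3 t *v v))"
    by (intro bounded_linear_compose[OF bounded_linear_scaleR_right] matrix_vector_mul_bounded_linear)
  have Sleb: "S \<in> sets lebesgue"
    unfolding S_def by (intro fmeasurableD lmeasurable_open bounded_subset[OF bounded_ball]) auto
  have hS: "halfspace_direction e absolutely_integrable_on S"
    using set_integrable_subset[OF halfspace_direction_absolutely_integrable Sleb] by (auto simp: S_def)
  have "integral S (halfspace_direction e) = (pi / 3) *\<^sub>R e"
    using integral_subset_negligible[of S "ball 0 1" "halfspace_direction e"]
      integral_halfspace_direction[OF e] by (auto simp: S_def intro: negligible_subset[of "{0}"])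
  then have "integral S (\<lambda>z. c *\<^sub>R (diag3 t *v halfspace_direction e z)) = (c * pi / 3) *\<^sub>R (diag3 t *v e)"
    using integral_linear[OF set_lebesgue_integral_eq_integral(1)[OF hS] lin]
    by (simp add: o_def matrix_vector_mult_scaleR)
  moreover have "(\<lambda>z. c *\<^sub>R (diag3 t *v halfspace_direction e z)) absolutely_integrable_on S"
    using absolutely_integrable_linear[OF hS lin] by (simp add: o_def)
  moreover have "set_integrable lebesgue S (\<lambda>z. (c * (norm z / norm (diag3 t *v z)) ^ 3) *\<^sub>R ?f (radial_diag3 t z))
      = set_integrable lebesgue S (\<lambda>z. c *\<^sub>R (diag3 t *v halfspace_direction e z))"
    by (rule set_integrable_cong[OF refl refl pointwise])
  moreover have "integral S (\<lambda>z. (c * (norm z / norm (diag3 t *v z)) ^ 3) *\<^sub>R ?f (radial_diag3 t z))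
      = integral S (\<lambda>z. c *\<^sub>R (diag3 t *v halfspace_direction e z))"
    by (rule Henstock_Kurzweil_Integration.integral_cong[OF pointwise])
  ultimately show ?thesis
    using integral_ball_radial_diag3_substitution[OF t, of ?f] unfolding S_def c_def by simp
qed

section \<open>Integrals over the sphere\<close>

definition sphere_integrable :: "(real^3 \<Rightarrow> 'b::{banach, second_countable_topology}) \<Rightarrow> bool" where
  "sphere_integrable g \<longleftrightarrow> set_integrable lborel (ball 0 1) (\<lambda>x. g (x /\<^sub>R norm x))"

lemma sphere_integrable_bounded:
  fixes g :: "real^3 \<Rightarrow> 'b::{banach, second_countable_topology}"
  assumes [measurable]: "g \<in> borel_measurable borel" and bound: "\<And>n. norm n = 1 \<Longrightarrow> norm (g n) \<le> C"
  shows "sphere_integrable g"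
  unfolding sphere_integrable_def
proof (rule set_integrable_lborel_bounded[where C="max C (norm (g 0))"])
  show "(\<lambda>x. g (x /\<^sub>R norm x)) \<in> borel_measurable borel" by measurable
  show "norm (g (x /\<^sub>R norm x)) \<le> max C (norm (g 0))" for x
    using bound[of "x /\<^sub>R norm x"] by (cases "x = 0") auto
qed auto

lemma sphere_integral_eq_integral:
  fixes g :: "real^3 \<Rightarrow> 'b::euclidean_space"
  assumes "sphere_integrable g"
  shows "sphere_integral g = 3 *\<^sub>R integral (ball 0 1) (\<lambda>x. g (x /\<^sub>R norm x))"
  using assms by (simp add: sphere_integral_def sphere_integrable_def set_borel_integral_eq_integral)

text \<open>Since \<open>x /\<^sub>R norm x = 0\<close> for \<open>x = 0\<close>, the cone construction also evaluates
  the integrand at the origin.\<close>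
lemma sphere_integral_cong:
  assumes "\<And>n. norm n = 1 \<Longrightarrow> g n = h n" and "g 0 = h 0"
  shows "sphere_integral g = sphere_integral h"
proof -
  have "g (x /\<^sub>R norm x) = h (x /\<^sub>R norm x)" for x :: "real^3"
    using assms by (cases "x = 0") auto
  then show ?thesis
    unfolding sphere_integral_def by simp
qed

lemma sphere_integrable_bounded_linear:
  assumes "bounded_linear L" "sphere_integrable g"
  shows "sphere_integrable (\<lambda>n. L (g n))"
  using integrable_bounded_linear[OF assms(1) assms(2)[unfolded sphere_integrable_def set_integrable_def]]
  unfolding sphere_integrable_def set_integrable_def by (simp add: linear_cmul[OF bounded_linear.linear[OF assms(1)]])

lemma sphere_integral_bounded_linear:
  assumes "bounded_linear L" "sphere_integrable g"
  shows "sphere_integral (\<lambda>n. L (g n)) = L (sphere_integral g)"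
  using integral_bounded_linear[OF assms(1) assms(2)[unfolded sphere_integrable_def set_integrable_def]]
  unfolding sphere_integral_def set_lebesgue_integral_def
  by (simp add: linear_cmul[OF bounded_linear.linear[OF assms(1)]])

lemma sphere_integral_add:
  assumes "sphere_integrable g" "sphere_integrable h"
  shows "sphere_integral (\<lambda>n. g n + h n) = sphere_integral g + sphere_integral h"
  using assms unfolding sphere_integral_def sphere_integrable_def by (simp add: scaleR_add_right)

lemma set_integral_ball_uminus:
  fixes f :: "'a::euclidean_space \<Rightarrow> 'b::{banach, second_countable_topology}"
  assumes [measurable]: "f \<in> borel_measurable borel"
  shows "(LINT x:ball 0 r|lborel. f (- x)) = (LINT x:ball 0 r|lborel. f x)"
proof -
  have [measurable]: "ball (0::'a) r \<in> sets borel" by simp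
  have "(lborel :: 'a measure) = distr lborel borel uminus"
    using lborel_affine[of "-1" 0] by (simp add: density_1)
  then have "(LINT x:ball 0 r|lborel. f x) = integral\<^sup>L (distr lborel borel uminus) (\<lambda>x. indicator (ball 0 r) x *\<^sub>R f x)"
    unfolding set_lebesgue_integral_def by (rule arg_cong)
  also have "\<dots> = integral\<^sup>L lborel (\<lambda>x. indicator (ball 0 r) (- x) *\<^sub>R f (- x))"
    by (rule integral_distr) simp_all
  also have "\<dots> = (LINT x:ball 0 r|lborel. f (- x))"
    unfolding set_lebesgue_integral_def by (simp add: indicator_def)
  finally show ?thesis ..
qed

lemma sphere_integral_halfspace:
  fixes g :: "real^3 \<Rightarrow> real"
  assumes [measurable]: "g \<in> borel_measurable borel" and bound: "\<And>n. norm n = 1 \<Longrightarrow> \<bar>g n\<bar> \<le> C"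
    and even: "\<And>n. g (- n) = g n" and a: "a \<noteq> 0"
  shows "sphere_integral (\<lambda>n. indicator {n. 0 \<le> n \<bullet> a} n * g n) = sphere_integral g / 2"
proof -
  define u where "u x = g (x /\<^sub>R norm x)" for x
  define h where "h x = indicator {x. 0 \<le> x \<bullet> a} x * u x" for x
  have [measurable]: "ball (0::real^3) 1 \<in> sets borel"
    "u \<in> borel_measurable borel" "h \<in> borel_measurable borel"
    unfolding u_def h_def by measurable
  have u_bound: "\<bar>u x\<bar> \<le> max C \<bar>g 0\<bar>" for x
    using bound[of "x /\<^sub>R norm x"] by (cases "x = 0") (auto simp: u_def)
  have int: "set_integrable lborel (ball 0 1) h" "set_integrable lborel (ball 0 1) (\<lambda>x. h (- x))"
    using u_bound by (auto intro!: set_integrable_lborel_bounded[where C="max C \<bar>g 0\<bar>"]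
        simp: h_def indicator_def abs_mult)
  have "{x::real^3. a \<bullet> x = 0} \<in> null_sets lebesgue"
    using negligible_hyperplane[of a 0] a negligible_iff_null_sets by blast
  then have "{x::real^3. a \<bullet> x = 0} \<in> null_sets lborel"
    by (auto simp: null_sets_completion_iff borel_closed closed_hyperplane)
  moreover have "h x + h (- x) = u x" if "a \<bullet> x \<noteq> 0" for x
    using that even[of "x /\<^sub>R norm x"] by (auto simp: h_def u_def indicator_def inner_commute)
  ultimately have "AE x in lborel. indicator (ball 0 1) x *\<^sub>R (h x + h (- x)) = indicator (ball 0 1) x *\<^sub>R u x"
    by (auto elim!: eventually_mono[OF AE_not_in])
  then have "(LINT x:ball 0 1|lborel. h x + h (- x)) = (LINT x:ball 0 1|lborel. u x)"
    unfolding set_lebesgue_integral_def by (intro integral_cong_AE) simp_all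
  then have "2 * (LINT x:ball 0 1|lborel. h x) = (LINT x:ball 0 1|lborel. u x)"
    using int set_integral_ball_uminus[of h 1] by simp
  moreover have "indicator {n. 0 \<le> n \<bullet> a} (x /\<^sub>R norm x) * g (x /\<^sub>R norm x) = h x" for x
    by (cases "x = 0") (simp_all add: h_def u_def indicator_def zero_le_mult_iff)
  ultimately show ?thesis
    by (simp add: sphere_integral_def u_def)
qed

lemma bounded_linear_dot_sigma: "bounded_linear dot_sigma"
  unfolding linear_conv_bounded_linear[symmetric]
  by (rule linearI) (simp_all add: dot_sigma_def scaleR_add_left sum.distrib scaleR_sum_right)

lemma sphere_integral_bloch:
  fixes h :: "real^3 \<Rightarrow> real"
  assumes "sphere_integrable h" "sphere_integrable (\<lambda>n. h n *\<^sub>R n)"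
  shows "sphere_integral (\<lambda>n. h n *\<^sub>R ((1/2::real) *\<^sub>R (mat 1 + dot_sigma n))) =
     (1/2::real) *\<^sub>R (sphere_integral h *\<^sub>R (mat 1 :: cmat2) + dot_sigma (sphere_integral (\<lambda>n. h n *\<^sub>R n)))"
proof -
  have identity: "bounded_linear (\<lambda>c. c *\<^sub>R ((1/2::real) *\<^sub>R (mat 1 :: cmat2)))"
    by (rule bounded_linear_scaleR_left)
  have half_sigma: "bounded_linear (\<lambda>v. (1/2::real) *\<^sub>R dot_sigma v)"
    by (intro bounded_linear_compose[OF bounded_linear_scaleR_right bounded_linear_dot_sigma])
  have "sphere_integral (\<lambda>n. h n *\<^sub>R ((1/2::real) *\<^sub>R (mat 1 + dot_sigma n))) =
      sphere_integral (\<lambda>n. h n *\<^sub>R ((1/2::real) *\<^sub>R (mat 1 :: cmat2)) + (1/2::real) *\<^sub>R dot_sigma (h n *\<^sub>R n))"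
    by (rule sphere_integral_cong)
      (simp_all add: linear_cmul[OF bounded_linear.linear[OF bounded_linear_dot_sigma]] linear_0[OF bounded_linear.linear[OF bounded_linear_dot_sigma]]
        scaleR_add_right)
  also have "\<dots> = sphere_integral (\<lambda>n. h n *\<^sub>R ((1/2::real) *\<^sub>R (mat 1 :: cmat2)))
      + sphere_integral (\<lambda>n. (1/2::real) *\<^sub>R dot_sigma (h n *\<^sub>R n))"
    by (rule sphere_integral_add[OF sphere_integrable_bounded_linear[OF identity assms(1)]
          sphere_integrable_bounded_linear[OF half_sigma assms(2)]])
  also have "\<dots> = sphere_integral h *\<^sub>R ((1/2::real) *\<^sub>R mat 1) + (1/2::real) *\<^sub>R dot_sigma (sphere_integral (\<lambda>n. h n *\<^sub>R n))"
    by (simp only: sphere_integral_bounded_linear[OF identity assms(1)]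
        sphere_integral_bounded_linear[OF half_sigma assms(2)])
  finally show ?thesis
    by (simp add: scaleR_add_right)
qed

lemma matrix_vector_mult_measurable [measurable (raw)]:
  fixes A :: "real^'n^'m"
  assumes "f \<in> borel_measurable M"
  shows "(\<lambda>x. A *v f x) \<in> borel_measurable M"
  using measurable_compose[OF assms borel_measurable_continuous_onI[OF matrix_vector_mult_linear_continuous_on]] .

lemma norm_diag3_mulv_le: "norm (diag3 t *v v) \<le> (\<Sum>i\<in>UNIV. \<bar>t$i\<bar>) * norm v"
proof -
  have "\<bar>t$i\<bar> \<le> (\<Sum>i\<in>UNIV. \<bar>t$i\<bar>)" for i
    by (rule member_le_sum) auto
  then have "norm (diag3 t *v v) \<le> norm ((\<Sum>i\<in>UNIV. \<bar>t$i\<bar>) *\<^sub>R v)"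
    by (intro norm_le_componentwise_cart) (simp add: diag3_mulv abs_mult mult_right_mono)
  then show ?thesis by simp
qed

lemma quadratic_form_matrix_inv_diag3:
  assumes "\<And>i. t$i \<noteq> 0"
  shows "n \<bullet> ((matrix_inv (diag3 t) ** matrix_inv (diag3 t)) *v n) = norm (matrix_inv (diag3 t) *v n) ^ 2"
  by (simp add: matrix_inv_diag3[OF assms] diag3_mult diag3_mulv power2_norm_eq_inner inner_vec_def
      sum_3 algebra_simps)

definition inverse_quartic_weight :: "real^3 \<Rightarrow> real^3 \<Rightarrow> real" where
  "inverse_quartic_weight t n = inverse (norm (matrix_inv (diag3 t) *v n) ^ 4)"

lemma LHS_density_diag3:
  assumes "\<And>i. t$i \<noteq> 0"
  shows "LHS_density (diag3 t) n = N_T (diag3 t) * inverse_quartic_weight t n"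
    "N_T (diag3 t) = inverse (sphere_integral (inverse_quartic_weight t))"
  by (simp_all add: LHS_density_def N_T_def inverse_quartic_weight_def[abs_def]
      quadratic_form_matrix_inv_diag3[OF assms] flip: power_mult)

lemma inverse_quartic_weight_measurable [measurable]:
  "inverse_quartic_weight t \<in> borel_measurable borel"
  unfolding inverse_quartic_weight_def by measurable

lemma inverse_quartic_weight_bound:
  assumes t: "\<And>i. t$i \<noteq> 0" and n: "norm n = 1"
  shows "\<bar>inverse_quartic_weight t n\<bar> \<le> (\<Sum>i\<in>UNIV. \<bar>t$i\<bar>) ^ 4"
proof -
  define M where "M = (\<Sum>i\<in>UNIV. \<bar>t$i\<bar>)"
  define q where "q = norm (matrix_inv (diag3 t) *v n)"
  have "1 \<le> M * q"
    using norm_diag3_mulv_le[of t "matrix_inv (diag3 t) *v n"] n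
    by (simp add: matrix_inv_diag3_mulv(2)[OF t] M_def q_def)
  moreover have "M \<ge> 0" "q \<ge> 0" by (simp_all add: M_def q_def sum_nonneg)
  ultimately have "q > 0" "1 \<le> M ^ 4 * q ^ 4"
    by (auto simp: one_le_power order.strict_iff_order simp flip: power_mult_distrib)
  have "inverse (q ^ 4) * 1 \<le> inverse (q ^ 4) * (M ^ 4 * q ^ 4)"
    by (rule mult_left_mono[OF \<open>1 \<le> M ^ 4 * q ^ 4\<close>]) simp
  also have "\<dots> = M ^ 4"
    using \<open>q > 0\<close> by simp
  finally show ?thesis
    by (simp add: inverse_quartic_weight_def M_def[symmetric] q_def[symmetric])
qed

lemma inverse_quartic_weight_uminus: "inverse_quartic_weight t (- n) = inverse_quartic_weight t n"
  by (simp add: inverse_quartic_weight_def linear_neg[OF matrix_vector_mul_linear])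

lemma inverse_quartic_weight_zero: "inverse_quartic_weight t 0 = 0"
  by (simp add: inverse_quartic_weight_def)

lemma mem_region_iff:
  assumes "norm n = 1"
  shows "n \<in> region T e \<longleftrightarrow> 0 \<le> n \<bullet> (matrix_inv T *v e)"
  using assms by (simp add: region_def unit_sphere3_def)

lemma closed_region: "closed (region T e)"
proof -
  have "region T e = sphere 0 1 \<inter> {n. 0 \<le> n \<bullet> (matrix_inv T *v e)}"
    by (auto simp: region_def unit_sphere3_def)
  then show ?thesis
    by (simp add: closed_Int closed_Collect_le continuous_on_inner continuous_on_const continuous_on_id)
qed

lemma LHS_region_sphere_integrable:
  assumes t: "\<And>i. t$i \<noteq> 0"
  shows "sphere_integrable (\<lambda>n. indicator (region (diag3 t) e) n * LHS_density (diag3 t) n)"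
    "sphere_integrable (\<lambda>n. (indicator (region (diag3 t) e) n * LHS_density (diag3 t) n) *\<^sub>R n)"
proof -
  define C where "C = \<bar>N_T (diag3 t)\<bar> * (\<Sum>i\<in>UNIV. \<bar>t$i\<bar>) ^ 4"
  have density: "LHS_density (diag3 t) = (\<lambda>n. N_T (diag3 t) * inverse_quartic_weight t n)"
    using LHS_density_diag3(1)[OF t] by auto
  have [measurable]: "region (diag3 t) e \<in> sets borel"
    by (simp add: borel_closed closed_region)
  have bound: "\<bar>indicator (region (diag3 t) e) n * LHS_density (diag3 t) n\<bar> \<le> C" if "norm n = 1" for n
    using inverse_quartic_weight_bound[OF t that]
    by (auto simp: C_def density indicator_def abs_mult intro: mult_left_mono)
  show "sphere_integrable (\<lambda>n. indicator (region (diag3 t) e) n * LHS_density (diag3 t) n)"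
    by (rule sphere_integrable_bounded[where C=C]) (use bound in \<open>simp_all add: density\<close>)
  show "sphere_integrable (\<lambda>n. (indicator (region (diag3 t) e) n * LHS_density (diag3 t) n) *\<^sub>R n)"
    by (rule sphere_integrable_bounded[where C=C]) (use bound in \<open>simp_all add: density\<close>)
qed

lemma LHS_region_mass:
  assumes t: "\<And>i. t$i \<noteq> 0" and N: "N_T (diag3 t) \<noteq> 0" and e: "norm e = 1"
  shows "sphere_integral (\<lambda>n. indicator (region (diag3 t) e) n * LHS_density (diag3 t) n) = 1/2"
proof -
  define a where "a = matrix_inv (diag3 t) *v e"
  have "diag3 t *v a = e" unfolding a_def by (rule matrix_inv_diag3_mulv(2)[OF t])
  then have "a \<noteq> 0" using e by auto
  have "sphere_integral (\<lambda>n. indicator (region (diag3 t) e) n * LHS_density (diag3 t) n)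
        = sphere_integral (\<lambda>n. N_T (diag3 t) * (indicator {n. 0 \<le> n \<bullet> a} n * inverse_quartic_weight t n))"
    by (rule sphere_integral_cong)
      (simp_all add: LHS_density_diag3[OF t] mem_region_iff indicator_def a_def inverse_quartic_weight_zero)
  also have "\<dots> = N_T (diag3 t) * sphere_integral (\<lambda>n. indicator {n. 0 \<le> n \<bullet> a} n * inverse_quartic_weight t n)"
    by (simp add: sphere_integral_def)
  also have "\<dots> = N_T (diag3 t) * (sphere_integral (inverse_quartic_weight t) / 2)"
    using sphere_integral_halfspace[OF _ inverse_quartic_weight_bound[OF t] _ \<open>a \<noteq> 0\<close>]
    by (simp add: inverse_quartic_weight_uminus)
  also have "\<dots> = 1/2"
    using N by (simp add: LHS_density_diag3(2)[OF t])
  finally show ?thesis .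
qed

lemma LHS_region_mean:
  assumes t: "\<And>i. t$i \<noteq> 0" and normalised: "2 * pi * N_T (diag3 t) * \<bar>det (diag3 t)\<bar> = 1"
    and e: "norm e = 1"
  shows "sphere_integral (\<lambda>n. (indicator (region (diag3 t) e) n * LHS_density (diag3 t) n) *\<^sub>R n)
    = (1/2) *\<^sub>R (diag3 t *v e)"
proof -
  define N where "N = N_T (diag3 t)"
  define g where "g n = (indicator {n. 0 \<le> n \<bullet> (matrix_inv (diag3 t) *v e)} n
    * inverse_quartic_weight t n) *\<^sub>R n" for n
  have "g \<in> borel_measurable borel"
    unfolding g_def by measurable
  moreover have "norm (g n) \<le> (\<Sum>i\<in>UNIV. \<bar>t$i\<bar>) ^ 4" if "norm n = 1" for n
    using inverse_quartic_weight_bound[OF t that] that by (simp add: g_def indicator_def)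
  ultimately have int: "sphere_integrable g"
    by (rule sphere_integrable_bounded)
  have "sphere_integral (\<lambda>n. (indicator (region (diag3 t) e) n * LHS_density (diag3 t) n) *\<^sub>R n)
      = sphere_integral (\<lambda>n. N *\<^sub>R g n)"
    by (rule sphere_integral_cong)
      (simp_all add: g_def N_def LHS_density_diag3[OF t] mem_region_iff indicator_def)
  also have "\<dots> = N *\<^sub>R sphere_integral g"
    by (rule sphere_integral_bounded_linear[OF bounded_linear_scaleR_right int])
  also have "\<dots> = (3 * N) *\<^sub>R integral (ball 0 1) (\<lambda>x. g (x /\<^sub>R norm x))"
    by (simp add: sphere_integral_eq_integral[OF int])
  also have "\<dots> = (N * \<bar>det (diag3 t)\<bar> * pi) *\<^sub>R (diag3 t *v e)"
    using integral_ball_weighted_direction[OF t e]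
    by (simp add: g_def inverse_quartic_weight_def)
  also have "\<dots> = (1/2) *\<^sub>R (diag3 t *v e)"
    using normalised by (simp add: N_def field_simps)
  finally show ?thesis .
qed

lemma sum_UNIV_2_times_2: "sum f (UNIV :: (2\<times>2) set) = f (1,1) + f (1,2) + f (2,1) + f (2,2)"
proof -
  have UNIV_eq: "(UNIV :: (2\<times>2) set) = {(1,1),(1,2),(2,1),(2,2)}"
    unfolding UNIV_Times_UNIV[symmetric] UNIV_2 by auto
  show ?thesis
    unfolding UNIV_eq by (simp add: add.assoc)
qed

lemma pauli_entries:
  "pauli 1 $ 1 $ 1 = 0" "pauli 1 $ 1 $ 2 = 1" "pauli 1 $ 2 $ 1 = 1" "pauli 1 $ 2 $ 2 = 0"
  "pauli 2 $ 1 $ 1 = 0" "pauli 2 $ 1 $ 2 = -\<i>" "pauli 2 $ 2 $ 1 = \<i>" "pauli 2 $ 2 $ 2 = 0"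
  "pauli 3 $ 1 $ 1 = 1" "pauli 3 $ 1 $ 2 = 0" "pauli 3 $ 2 $ 1 = 0" "pauli 3 $ 2 $ 2 = -1"
  by (simp_all add: pauli_def)

lemma dot_sigma_entries:
  "dot_sigma n $ 1 $ 1 = complex_of_real (n$3)"
  "dot_sigma n $ 1 $ 2 = complex_of_real (n$1) - \<i> * complex_of_real (n$2)"
  "dot_sigma n $ 2 $ 1 = complex_of_real (n$1) + \<i> * complex_of_real (n$2)"
  "dot_sigma n $ 2 $ 2 = - complex_of_real (n$3)"
  by (simp_all add: dot_sigma_def sum_3 pauli_entries scaleR_conv_of_real[where 'a=complex])

lemma ptrace_T_state_projector:
  "ptrace_A (T_state t ** kron (projector e) (mat 1)) = (1/4::real) *\<^sub>R (mat 1 + dot_sigma (diag3 t *v e))"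
  unfolding vec_eq_iff forall_2 diag3_mulv
  by (simp add: ptrace_A_def T_state_def kron_def projector_def matrix_matrix_mult_def sum_UNIV_2_times_2
      sum_2 sum_3 pauli_entries dot_sigma_entries mat_def scaleR_conv_of_real[where 'a=complex] field_simps)

lemma mtrace_T_state_projector: "mtrace (T_state t ** kron (projector e) (mat 1)) = 1/2"
  by (simp add: mtrace_def T_state_def kron_def projector_def matrix_matrix_mult_def sum_UNIV_2_times_2
      sum_2 sum_3 pauli_entries dot_sigma_entries mat_def scaleR_conv_of_real[where 'a=complex] field_simps)

theorem mainTheorem3:
  fixes t :: "real^3"
  defines "T \<equiv> diag3 t"
  assumes nonzero: "t $ 1 * t $ 2 * t $ 3 \<noteq> 0"
    and valid: "density_operator (T_state t)"
    and norm_cond: "2 * pi * N_T T * \<bar>det T\<bar> = 1"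
  shows "\<forall>e. norm e = 1 \<longrightarrow>
      sphere_integral (\<lambda>n. indicator (region T e) n * LHS_density T n) = 1/2
    \<and> sphere_integral (\<lambda>n. (indicator (region T e) n * LHS_density T n) *\<^sub>R n) = (1/2) *\<^sub>R (T *v e)
    \<and> ptrace_A (T_state t ** kron (projector e) (mat 1))
        = sphere_integral (\<lambda>n. (LHS_density T n * response T e n) *\<^sub>R
                                 ((1/2 :: real) *\<^sub>R (mat 1 + dot_sigma n)))
    \<and> mtrace (T_state t ** kron (projector e) (mat 1))
        = complex_of_real (sphere_integral (\<lambda>n. LHS_density T n * response T e n))"
  apply (intro allI impI)
  subgoal premises e for e
  proof -
    have t: "t$i \<noteq> 0" for i using nonzero exhaust_3[of i] by auto
    have "N_T T \<noteq> 0" using norm_cond by auto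
    have response: "LHS_density T n * response T e n = indicator (region T e) n * LHS_density T n" for n
      by (simp add: response_def indicator_def)
    note mass = LHS_region_mass[OF t \<open>N_T T \<noteq> 0\<close>[unfolded T_def] e, folded T_def]
    note mean = LHS_region_mean[OF t norm_cond[unfolded T_def] e, folded T_def]
    show ?thesis
      using sphere_integral_bloch[OF LHS_region_sphere_integrable[OF t, of e, folded T_def]]
      by (simp add: response mass mean ptrace_T_state_projector[of t e, folded T_def] mtrace_T_state_projector
          linear_cmul[OF bounded_linear.linear[OF bounded_linear_dot_sigma]] scaleR_add_right)
  qed
  done

end
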